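(* Let $k\ge0$ and $\ell\ge4$ be integers and let $G$ be a bipartite graph of order $n\ge (k+\lfloor\ell/2\rfloor-1)^2-(k+\lfloor\ell/2\rfloor-2)\ell+\ell^2k+\ell^2-\ell$ that contains no subgraph isomorphic to $kS_{\ell-1}\cup P_\ell$. Then $e(G)\le (k+\lfloor\ell/2\rfloor-1)n$.
   Context: $P_\ell$ is the path of order $\ell$; $S_{\ell-1}=K_{1,\ell-1}$ is the star of order $\ell$; $kS_{\ell-1}\cup P_\ell$ is the vertex-disjoint union of $k$ copies of $S_{\ell-1}$ and one $P_\ell$ (for $k=0$ it is just $P_\ell$). $e(G)$ is the number of edges. *)

theory Defs
  imports Main
begin

definition simple_graph :: "'a set \<Rightarrow> 'a set set \<Rightarrow> bool" where
  "simple_graph V E \<longleftrightarrow> finite V \<and>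
     (\<forall>e\<in>E. \<exists>u v. e = {u, v} \<and> u \<noteq> v \<and> u \<in> V \<and> v \<in> V)"

definition bipartite :: "'a set \<Rightarrow> 'a set set \<Rightarrow> bool" where
  "bipartite V E \<longleftrightarrow> (\<exists>A B. A \<inter> B = {} \<and> A \<union> B = V \<and>
     (\<forall>e\<in>E. \<exists>u\<in>A. \<exists>v\<in>B. e = {u, v}))"

definition contains_subgraph :: "'b set \<Rightarrow> 'b set set \<Rightarrow> 'a set \<Rightarrow> 'a set set \<Rightarrow> bool" where
  "contains_subgraph VH EH V E \<longleftrightarrow>
     (\<exists>f. inj_on f VH \<and> f ` VH \<subseteq> V \<and> (\<forall>e\<in>EH. f ` e \<in> E))"

text \<open>The graph k S_{l-1} \<union> P_l: copies i < k are stars with centre (i,0) and leaves (i,j), 1 \<le> j < l;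
  copy k is the path (k,0) - (k,1) - ... - (k,l-1).\<close>
definition SP_verts :: "nat \<Rightarrow> nat \<Rightarrow> (nat \<times> nat) set" where
  "SP_verts k l = {(i, j). i \<le> k \<and> j < l}"

definition SP_edges :: "nat \<Rightarrow> nat \<Rightarrow> (nat \<times> nat) set set" where
  "SP_edges k l = {{(i, 0), (i, j)} | i j. i < k \<and> 1 \<le> j \<and> j < l}
                \<union> {{(k, j), (k, j + 1)} | j. j + 1 < l}"

end

theory Submission
  imports Defs
begin

text \<open>Induction on \<open>k\<close>, with \<open>h = l div 2\<close>. For \<open>k = 0\<close> this is an Erdos-Gallai type bound:
  a bipartite graph with more than \<open>(h - 1) n\<close> edges contains a path on \<open>2h + 1\<close> vertices. In the
  step from \<open>k\<close> to \<open>k + 1\<close>, either some vertex has degree at least \<open>(k + 2) l - 1\<close>: it is deleted,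
  the induction hypothesis embeds \<open>k S\<^sub>l\<^sub>-\<^sub>1 \<union> P\<^sub>l\<close> in the rest, and \<open>l - 1\<close> of its neighbours
  outside the image complete a new star. Or all degrees are smaller; since the average degree exceeds
  \<open>l - 2\<close>, some vertex has \<open>l - 1\<close> neighbours, and deleting this star loses at most
  \<open>l ((k + 2) l - 2)\<close> edges, which the lower bound on \<open>n\<close> is designed to absorb.\<close>

definition neighbours :: "'a set set \<Rightarrow> 'a \<Rightarrow> 'a set" where
  "neighbours E v = {w. {v, w} \<in> E}"

abbreviation degree :: "'a set set \<Rightarrow> 'a \<Rightarrow> nat" where
  "degree E v \<equiv> card (neighbours E v)"

definition edges_avoiding :: "'a set set \<Rightarrow> 'a set \<Rightarrow> 'a set set" where
  "edges_avoiding E S = {e \<in> E. e \<inter> S = {}}"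

definition bipartition :: "'a set \<Rightarrow> 'a set \<Rightarrow> 'a set set \<Rightarrow> bool" where
  "bipartition A B E \<longleftrightarrow> A \<inter> B = {} \<and> (\<forall>e\<in>E. \<exists>u\<in>A. \<exists>v\<in>B. e = {u, v})"

definition subgraph_embedding ::
    "('b \<Rightarrow> 'a) \<Rightarrow> 'b set \<Rightarrow> 'b set set \<Rightarrow> 'a set \<Rightarrow> 'a set set \<Rightarrow> bool" where
  "subgraph_embedding f VH EH V E \<longleftrightarrow> inj_on f VH \<and> f ` VH \<subseteq> V \<and> (\<forall>e\<in>EH. f ` e \<in> E)"

lemma contains_subgraph_iff_embedding:
  "contains_subgraph VH EH V E \<longleftrightarrow> (\<exists>f. subgraph_embedding f VH EH V E)"
  unfolding contains_subgraph_def subgraph_embedding_def ..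

lemma subgraph_embedding_mono:
  "subgraph_embedding f VH EH V E \<Longrightarrow> V \<subseteq> V' \<Longrightarrow> E \<subseteq> E' \<Longrightarrow> subgraph_embedding f VH EH V' E'"
  unfolding subgraph_embedding_def by blast

lemma simple_graph_finite_edges:
  assumes "simple_graph V E"
  shows "finite E"
proof -
  have "E \<subseteq> Pow V" "finite V"
    using assms unfolding simple_graph_def by auto
  then show ?thesis
    by (meson finite_Pow_iff finite_subset)
qed

lemma edges_avoiding_subset: "edges_avoiding E S \<subseteq> E"
  unfolding edges_avoiding_def by auto

lemma simple_graph_edges_avoiding:
  "simple_graph V E \<Longrightarrow> simple_graph (V - S) (edges_avoiding E S)"
  unfolding simple_graph_def edges_avoiding_def by fastforce

lemma neighbours_subset:
  assumes "simple_graph V E"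
  shows "neighbours E v \<subseteq> V - {v}"
  using assms unfolding simple_graph_def neighbours_def by (fastforce simp: doubleton_eq_iff)

lemma finite_neighbours:
  assumes "simple_graph V E"
  shows "finite (neighbours E v)"
  using finite_subset[OF neighbours_subset[OF assms]] assms unfolding simple_graph_def by simp

lemma card_incident_edges:
  assumes "simple_graph V E"
  shows "card {e \<in> E. v \<in> e} = degree E v"
proof -
  have "{e \<in> E. v \<in> e} = (\<lambda>w. {v, w}) ` neighbours E v"
    using assms unfolding simple_graph_def neighbours_def by (fastforce simp: insert_commute)
  moreover have "inj_on (\<lambda>w. {v, w}) (neighbours E v)"
    by (auto simp: inj_on_def doubleton_eq_iff)
  ultimately show ?thesis
    by (simp add: card_image)
qed

lemma card_edges_le_avoiding_plus_degrees:
  assumes "simple_graph V E" "finite S"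
  shows "card E \<le> card (edges_avoiding E S) + (\<Sum>v\<in>S. degree E v)"
proof -
  have "card E = card (edges_avoiding E S \<union> (\<Union>v\<in>S. {e \<in> E. v \<in> e}))"
    unfolding edges_avoiding_def by (rule arg_cong[where f = card]) auto
  also have "\<dots> \<le> card (edges_avoiding E S) + card (\<Union>v\<in>S. {e \<in> E. v \<in> e})"
    by (rule card_Un_le)
  also have "card (\<Union>v\<in>S. {e \<in> E. v \<in> e}) \<le> (\<Sum>v\<in>S. card {e \<in> E. v \<in> e})"
    using card_UN_le[OF assms(2)] .
  finally show ?thesis
    using card_incident_edges[OF assms(1)] by simp
qed

lemma card_edges_le_avoiding_plus_inside:
  assumes "simple_graph V E" and closed: "\<forall>x\<in>S. neighbours E x \<subseteq> S"
  shows "card E \<le> card (edges_avoiding E S) + card {e \<in> E. e \<subseteq> S}"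
proof -
  have "E \<subseteq> edges_avoiding E S \<union> {e \<in> E. e \<subseteq> S}"
  proof
    fix e assume "e \<in> E"
    then obtain a b where e: "e = {a, b}" "{a, b} \<in> E" "{b, a} \<in> E"
      using assms(1) unfolding simple_graph_def by (metis insert_commute)
    then have "a \<in> S \<or> b \<in> S \<Longrightarrow> e \<subseteq> S"
      using closed unfolding neighbours_def by blast
    then show "e \<in> edges_avoiding E S \<union> {e \<in> E. e \<subseteq> S}"
      using \<open>e \<in> E\<close> e(1) unfolding edges_avoiding_def by auto
  qed
  then have "card E \<le> card (edges_avoiding E S \<union> {e \<in> E. e \<subseteq> S})"
    using simple_graph_finite_edges[OF assms(1)] by (intro card_mono) (auto simp: edges_avoiding_def)
  then show ?thesis
    using card_Un_le order_trans by blast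
qed

lemma edge_density_edges_avoiding:
  fixes c :: nat
  assumes "finite V" "S \<subseteq> V"
    and "c * card V < card E" "card E \<le> card (edges_avoiding E S) + c * card S"
  shows "c * card (V - S) < card (edges_avoiding E S)"
proof -
  have "card V = card (V - S) + card S"
    using assms(1,2) by (metis card_Diff_subset card_mono finite_subset le_add_diff_inverse2)
  then show ?thesis
    using assms(3,4) by (simp add: algebra_simps)
qed

lemma bipartition_swap:
  assumes "bipartition A B E"
  shows "bipartition B A E"
  unfolding bipartition_def
proof (intro conjI ballI)
  show "B \<inter> A = {}"
    using assms unfolding bipartition_def by blast
  fix e assume "e \<in> E"
  then obtain u v where "u \<in> A" "v \<in> B" "e = {u, v}"
    using assms unfolding bipartition_def by blast
  then show "\<exists>u\<in>B. \<exists>v\<in>A. e = {u, v}"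
    by (intro bexI[of _ v] bexI[of _ u]) (simp_all add: insert_commute)
qed

lemma bipartition_edge:
  assumes "bipartition A B E" "{x, y} \<in> E" "x \<in> A"
  shows "y \<in> B"
proof -
  obtain u v where "u \<in> A" "v \<in> B" "{x, y} = {u, v}" "A \<inter> B = {}"
    using assms(1,2) unfolding bipartition_def by blast
  then show ?thesis
    using assms(3) unfolding doubleton_eq_iff by blast
qed

lemma bipartite_obtain_bipartition:
  assumes "bipartite V E" "x \<in> V"
  obtains A B where "A \<union> B = V" "bipartition A B E" "x \<in> A"
proof -
  obtain A B where AB: "A \<union> B = V" "bipartition A B E"
    using assms(1) unfolding bipartite_def bipartition_def by blast
  show ?thesis
  proof (cases "x \<in> A")
    case True
    then show ?thesis
      using that AB by blast
  next
    case False
    then have "x \<in> B"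
      using AB(1) assms(2) by blast
    then show ?thesis
      using that[of B A] AB bipartition_swap by blast
  qed
qed

lemma bipartite_edges_avoiding:
  assumes "bipartite V E"
  shows "bipartite (V - S) (edges_avoiding E S)"
proof -
  obtain A B where AB: "A \<union> B = V" "bipartition A B E"
    using assms unfolding bipartite_def bipartition_def by blast
  have "bipartition (A - S) (B - S) (edges_avoiding E S)"
    unfolding bipartition_def
  proof (intro conjI ballI)
    show "(A - S) \<inter> (B - S) = {}"
      using AB(2) unfolding bipartition_def by blast
    fix e assume "e \<in> edges_avoiding E S"
    then have e: "e \<in> E" "e \<inter> S = {}"
      unfolding edges_avoiding_def by auto
    then obtain u v where "u \<in> A" "v \<in> B" "e = {u, v}"
      using AB(2) unfolding bipartition_def by auto
    with e(2) show "\<exists>u\<in>A - S. \<exists>v\<in>B - S. e = {u, v}"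
      by auto
  qed
  moreover have "(A - S) \<union> (B - S) = V - S"
    using AB(1) by blast
  ultimately show ?thesis
    unfolding bipartite_def bipartition_def by blast
qed

lemma card_edges_inside_le:
  assumes "bipartition A B E" "finite S"
  shows "card {e \<in> E. e \<subseteq> S} \<le> card (S \<inter> A) * card (S \<inter> B)"
proof -
  let ?P = "(S \<inter> A) \<times> (S \<inter> B)"
  have fin: "finite ?P"
    using assms(2) by simp
  have "{e \<in> E. e \<subseteq> S} \<subseteq> (\<lambda>(a, b). {a, b}) ` ?P"
  proof
    fix e assume "e \<in> {e \<in> E. e \<subseteq> S}"
    then have e: "e \<in> E" "e \<subseteq> S"
      by auto
    then obtain a b where "a \<in> A" "b \<in> B" "e = {a, b}"
      using assms(1) unfolding bipartition_def by auto
    with e(2) show "e \<in> (\<lambda>(a, b). {a, b}) ` ?P"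
      by (intro image_eqI[of _ _ "(a, b)"]) simp_all
  qed
  then have "card {e \<in> E. e \<subseteq> S} \<le> card ((\<lambda>(a, b). {a, b}) ` ?P)"
    by (rule card_mono[OF finite_imageI[OF fin]])
  also have "\<dots> \<le> card ?P"
    using fin by (rule card_image_le)
  finally show ?thesis
    by (simp add: card_cartesian_product)
qed

lemma bipartite_twice_card_edges_le:
  assumes "simple_graph V E" "bipartite V E"
  shows "2 * card E \<le> (\<Sum>v\<in>V. degree E v)"
proof -
  obtain A B where AB: "A \<union> B = V" "bipartition A B E"
    using assms(2) unfolding bipartite_def bipartition_def by blast
  have fin: "finite A" "finite B"
    using assms(1) AB(1) unfolding simple_graph_def by auto
  have "edges_avoiding E A = {}" "edges_avoiding E B = {}"
    using AB(2) unfolding bipartition_def edges_avoiding_def by fastforce+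
  then have "card E \<le> (\<Sum>v\<in>A. degree E v)" "card E \<le> (\<Sum>v\<in>B. degree E v)"
    using card_edges_le_avoiding_plus_degrees[OF assms(1) fin(1)]
      card_edges_le_avoiding_plus_degrees[OF assms(1) fin(2)] by simp_all
  moreover have "(\<Sum>v\<in>V. degree E v) = (\<Sum>v\<in>A. degree E v) + (\<Sum>v\<in>B. degree E v)"
    using AB fin sum.union_disjoint[OF fin] unfolding bipartition_def by simp
  ultimately show ?thesis
    by simp
qed

subsection \<open>Paths\<close>

fun walk :: "'a set set \<Rightarrow> 'a list \<Rightarrow> bool" where
  "walk E [] = True"
| "walk E [x] = True"
| "walk E (x # y # zs) \<longleftrightarrow> {x, y} \<in> E \<and> walk E (y # zs)"

lemma walk_Cons: "walk E (x # xs) \<longleftrightarrow> walk E xs \<and> (xs \<noteq> [] \<longrightarrow> {x, hd xs} \<in> E)"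
  by (cases xs) auto

lemma walk_append:
  "walk E (xs @ ys) \<longleftrightarrow> walk E xs \<and> walk E ys \<and> (xs \<noteq> [] \<and> ys \<noteq> [] \<longrightarrow> {last xs, hd ys} \<in> E)"
  by (induction xs) (auto simp: walk_Cons)

lemma walk_nth: "walk E xs \<Longrightarrow> Suc j < length xs \<Longrightarrow> {xs ! j, xs ! Suc j} \<in> E"
proof (induction xs arbitrary: j)
  case (Cons x xs)
  then show ?case
    by (cases j) (auto simp: walk_Cons hd_conv_nth)
qed simp

lemma walk_take: "walk E xs \<Longrightarrow> walk E (take n xs)"
  by (metis append_take_drop_id walk_append)

lemma walk_mono: "walk E xs \<Longrightarrow> E \<subseteq> E' \<Longrightarrow> walk E' xs"
  by (induction xs rule: walk.induct) auto

lemma closed_walk_rotate1: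
  assumes "walk E xs" "{last xs, hd xs} \<in> E"
  shows "walk E (rotate1 xs) \<and> {last (rotate1 xs), hd (rotate1 xs)} \<in> E"
proof (cases xs)
  case xs: (Cons y zs)
  show ?thesis
  proof (cases zs)
    case Nil
    then show ?thesis
      using assms xs by simp
  next
    case (Cons z ws)
    then show ?thesis
      using assms xs walk_append[of E zs "[y]"] by (simp add: insert_commute)
  qed
qed (use assms in simp)

lemma closed_walk_rotate:
  "walk E xs \<Longrightarrow> {last xs, hd xs} \<in> E \<Longrightarrow>
    walk E (rotate n xs) \<and> {last (rotate n xs), hd (rotate n xs)} \<in> E"
  by (induction n) (simp_all add: closed_walk_rotate1)

lemma bipartite_path_sides:
  assumes "bipartition A B E" "walk E xs" "distinct xs" "set xs \<subseteq> A \<union> B" "xs \<noteq> []" "hd xs \<in> A"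
  shows "card (set xs \<inter> A) = (length xs + 1) div 2 \<and> card (set xs \<inter> B) = length xs div 2
    \<and> (last xs \<in> A \<longleftrightarrow> odd (length xs))"
  using assms
proof (induction xs arbitrary: A B)
  case (Cons x xs)
  show ?case
  proof (cases xs)
    case Nil
    then show ?thesis
      using Cons.prems unfolding bipartition_def by auto
  next
    case (Cons y ys)
    have "y \<in> B"
      using Cons.prems \<open>xs = y # ys\<close> bipartition_edge by fastforce
    moreover have "walk E xs" "distinct xs" "set xs \<subseteq> B \<union> A" "bipartition B A E"
      using Cons.prems \<open>xs = y # ys\<close> bipartition_swap by (auto simp: walk_Cons)
    ultimately have IH: "card (set xs \<inter> B) = (length xs + 1) div 2 \<and> card (set xs \<inter> A) = length xs div 2
      \<and> (last xs \<in> B \<longleftrightarrow> odd (length xs))"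
      using Cons.IH[of B A] \<open>xs = y # ys\<close> by simp
    have "set (x # xs) \<inter> A = insert x (set xs \<inter> A)" "set (x # xs) \<inter> B = set xs \<inter> B"
      "x \<notin> set xs" "last (x # xs) = last xs" "last xs \<in> A \<union> B" "A \<inter> B = {}"
      using Cons.prems \<open>xs = y # ys\<close> last_in_set[of xs] unfolding bipartition_def by auto
    then show ?thesis
      using IH by auto
  qed
qed simp

definition is_path :: "'a set set \<Rightarrow> 'a set \<Rightarrow> 'a list \<Rightarrow> bool" where
  "is_path E V xs \<longleftrightarrow> walk E xs \<and> distinct xs \<and> set xs \<subseteq> V"

definition longest_path :: "'a set set \<Rightarrow> 'a set \<Rightarrow> 'a list \<Rightarrow> bool" where
  "longest_path E V xs \<longleftrightarrow> is_path E V xs \<and> (\<forall>ys. is_path E V ys \<longrightarrow> length ys \<le> length xs)"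

lemma is_path_mono: "is_path E V xs \<Longrightarrow> E \<subseteq> E' \<Longrightarrow> V \<subseteq> V' \<Longrightarrow> is_path E' V' xs"
  unfolding is_path_def using walk_mono by blast

lemma is_path_take: "is_path E V xs \<Longrightarrow> is_path E V (take n xs)"
  unfolding is_path_def using walk_take by (auto dest: in_set_takeD)

lemma longest_path_exists:
  assumes "finite V" "v \<in> V"
  obtains xs where "longest_path E V xs" "xs \<noteq> []"
proof -
  have v: "is_path E V [v]"
    using assms(2) unfolding is_path_def by simp
  have "length ys < Suc (card V)" if "is_path E V ys" for ys
  proof -
    have "length ys = card (set ys)"
      using that unfolding is_path_def by (simp add: distinct_card)
    also have "\<dots> \<le> card V"
      using that assms(1) unfolding is_path_def by (simp add: card_mono)
    finally show ?thesis
      by simp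
  qed
  then obtain xs where xs: "is_path E V xs" "\<forall>ys. is_path E V ys \<longrightarrow> length ys \<le> length xs"
    using Lattices_Big.ex_has_greatest_nat[of "is_path E V" "[v]" length] v by blast
  moreover have "xs \<noteq> []"
    using xs(2) v by force
  ultimately show ?thesis
    using that unfolding longest_path_def by blast
qed

lemma longest_path_hd_neighbours:
  assumes "simple_graph V E" "longest_path E V xs" "xs \<noteq> []"
  shows "neighbours E (hd xs) \<subseteq> set xs"
proof
  fix w assume w: "w \<in> neighbours E (hd xs)"
  show "w \<in> set xs"
  proof (rule ccontr)
    assume "w \<notin> set xs"
    moreover have "w \<in> V"
      using w neighbours_subset[OF assms(1)] by blast
    moreover have "{w, hd xs} \<in> E"
      using w unfolding neighbours_def by (simp add: insert_commute)
    ultimately have "is_path E V (w # xs)"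
      using assms(2,3) unfolding longest_path_def is_path_def by (simp add: walk_Cons)
    then show False
      using assms(2) unfolding longest_path_def by fastforce
  qed
qed

lemma longest_path_bipartite:
  assumes "simple_graph V E" "A \<union> B = V" "bipartition A B E"
    and "longest_path E V xs" "xs \<noteq> []" "hd xs \<in> A"
  shows "degree E (hd xs) \<le> length xs div 2"
    and "degree E (hd xs) = length xs div 2 \<Longrightarrow> even (length xs) \<Longrightarrow> {last xs, hd xs} \<in> E"
proof -
  have sides: "card (set xs \<inter> B) = length xs div 2" "last xs \<in> A \<longleftrightarrow> odd (length xs)"
    using bipartite_path_sides[OF assms(3)] assms(2,4-6) unfolding longest_path_def is_path_def
    by blast+
  have nbrs: "neighbours E (hd xs) \<subseteq> set xs \<inter> B"
    using longest_path_hd_neighbours[OF assms(1,4,5)] bipartition_edge[OF assms(3) _ assms(6)]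
    unfolding neighbours_def by blast
  then show "degree E (hd xs) \<le> length xs div 2"
    using sides(1) by (metis card_mono finite_Int finite_set)
  assume "degree E (hd xs) = length xs div 2" "even (length xs)"
  then have "neighbours E (hd xs) = set xs \<inter> B"
    using nbrs sides(1) by (metis card_subset_eq finite_Int finite_set)
  moreover have "last xs \<in> set xs \<inter> B"
  proof -
    have "last xs \<in> set xs" "set xs \<subseteq> A \<union> B"
      using assms(2,4,5) unfolding longest_path_def is_path_def by auto
    then show ?thesis
      using sides(2) \<open>even (length xs)\<close> by auto
  qed
  ultimately have "{hd xs, last xs} \<in> E"
    unfolding neighbours_def by blast
  then show "{last xs, hd xs} \<in> E"
    by (simp add: insert_commute)
qed

text \<open>Every rotation of a longest path closing a cycle is again a longest path, so no edge
  leaves its vertex set.\<close>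

lemma longest_cycle_neighbours:
  assumes "simple_graph V E" "longest_path E V xs" "{last xs, hd xs} \<in> E"
  shows "\<forall>x\<in>set xs. neighbours E x \<subseteq> set xs"
proof
  fix x assume "x \<in> set xs"
  then obtain i where "i < length xs" "x = xs ! i"
    by (metis in_set_conv_nth)
  moreover from this have "xs \<noteq> []"
    by auto
  ultimately have "x = hd (rotate i xs)" "rotate i xs \<noteq> []"
    by (simp_all add: hd_rotate_conv_nth)
  moreover have "longest_path E V (rotate i xs)"
    using assms(2) closed_walk_rotate[OF _ assms(3), of i] unfolding longest_path_def is_path_def by simp
  ultimately show "neighbours E x \<subseteq> set xs"
    using longest_path_hd_neighbours[OF assms(1), of "rotate i xs"] by simp
qed

lemma card_edges_le_delete_longest_path:
  assumes "simple_graph V E" "A \<union> B = V" "bipartition A B E"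
    and xs: "longest_path E V xs" "xs \<noteq> []" "hd xs \<in> A"
    and h: "length xs = 2 * h" "h \<le> degree E (hd xs)" "2 \<le> h"
  shows "card E \<le> card (edges_avoiding E (set xs)) + (h - 1) * card (set xs)"
proof -
  note long = longest_path_bipartite[OF assms(1-3) xs]
  have "\<forall>x\<in>set xs. neighbours E x \<subseteq> set xs"
    using longest_cycle_neighbours[OF assms(1) xs(1) long(2)] long(1) h(1,2) by simp
  then have "card E \<le> card (edges_avoiding E (set xs)) + card {e \<in> E. e \<subseteq> set xs}"
    by (rule card_edges_le_avoiding_plus_inside[OF assms(1)])
  moreover have path: "walk E xs" "distinct xs" "set xs \<subseteq> A \<union> B"
    using xs(1) assms(2) unfolding longest_path_def is_path_def by auto
  then have "card (set xs \<inter> A) = h" "card (set xs \<inter> B) = h" "card (set xs) = 2 * h"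
    using bipartite_path_sides[OF assms(3) path xs(2,3)] distinct_card[OF path(2)] h(1) by simp_all
  then have "card {e \<in> E. e \<subseteq> set xs} \<le> h * h"
    using card_edges_inside_le[OF assms(3), of "set xs"] by simp
  moreover have "h * h \<le> (h - 1) * card (set xs)"
  proof -
    obtain g where "h = g + 2"
      using h(3) by (metis add.commute le_Suc_ex)
    then show ?thesis
      using \<open>card (set xs) = 2 * h\<close> by (simp add: algebra_simps)
  qed
  ultimately show ?thesis
    by linarith
qed

text \<open>Induction on \<open>n\<close>: delete a vertex of degree less than \<open>h\<close> if there is one; otherwise a
  longest path has at least \<open>2h\<close> vertices, and if it has exactly \<open>2h\<close> it spans a component with at
  most \<open>h\<^sup>2 \<le> (h - 1) 2h\<close> edges, which can be deleted.\<close>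

lemma bipartite_long_path:
  assumes "2 \<le> h" "l \<le> 2 * h + 1"
  shows "simple_graph V E \<Longrightarrow> bipartite V E \<Longrightarrow> (h - 1) * card V < card E \<Longrightarrow>
    \<exists>xs. is_path E V xs \<and> length xs = l"
proof (induction "card V" arbitrary: V E rule: less_induct)
  case less
  have finV: "finite V"
    using less.prems(1) unfolding simple_graph_def by simp
  have by_deletion: "\<exists>xs. is_path E V xs \<and> length xs = l"
    if S: "S \<subseteq> V" "S \<noteq> {}" "card E \<le> card (edges_avoiding E S) + (h - 1) * card S" for S
  proof -
    have "card (V - S) < card V"
      using S by (intro psubset_card_mono finV) auto
    moreover have "(h - 1) * card (V - S) < card (edges_avoiding E S)"
      using edge_density_edges_avoiding[OF finV S(1) less.prems(3) S(3)] .
    ultimately obtain xs where "is_path (edges_avoiding E S) (V - S) xs" "length xs = l"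
      using less.hyps[of "V - S" "edges_avoiding E S"] simple_graph_edges_avoiding[OF less.prems(1)]
        bipartite_edges_avoiding[OF less.prems(2)] by blast
    then show ?thesis
      using is_path_mono edges_avoiding_subset by blast
  qed
  show ?case
  proof (cases "\<exists>v\<in>V. degree E v < h")
    case True
    then obtain v where "v \<in> V" "degree E v \<le> (h - 1) * card {v}"
      by fastforce
    then show ?thesis
      using by_deletion[of "{v}"] card_edges_le_avoiding_plus_degrees[OF less.prems(1), of "{v}"]
      by simp
  next
    case False
    obtain e where "e \<in> E"
      using less.prems(3) by (metis card.empty ex_in_conv not_less0)
    then obtain v where "v \<in> V"
      using less.prems(1) unfolding simple_graph_def by auto
    then obtain xs where xs: "longest_path E V xs" "xs \<noteq> []"
      using longest_path_exists[OF finV] by blast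
    then have "hd xs \<in> V"
      using hd_in_set[of xs] unfolding longest_path_def is_path_def by blast
    then obtain A B where AB: "A \<union> B = V" "bipartition A B E" "hd xs \<in> A"
      using bipartite_obtain_bipartition[OF less.prems(2)] by blast
    have "h \<le> degree E (hd xs)"
      using False \<open>hd xs \<in> V\<close> by auto
    show ?thesis
    proof (cases "l \<le> length xs")
      case True
      then show ?thesis
        using is_path_take[of E V xs l] xs(1) unfolding longest_path_def by auto
    next
      case False
      then have "length xs = 2 * h"
        using longest_path_bipartite(1)[OF less.prems(1) AB(1,2) xs AB(3)] \<open>h \<le> degree E (hd xs)\<close>
          assms(2) by linarith
      then have "card E \<le> card (edges_avoiding E (set xs)) + (h - 1) * card (set xs)"
        using card_edges_le_delete_longest_path[OF less.prems(1) AB(1,2) xs AB(3)]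
          \<open>h \<le> degree E (hd xs)\<close> assms(1) by blast
      moreover have "set xs \<subseteq> V" "set xs \<noteq> {}"
        using xs unfolding longest_path_def is_path_def by auto
      ultimately show ?thesis
        using by_deletion by blast
    qed
  qed
qed

subsection \<open>Embedding \<open>k S\<^sub>l\<^sub>-\<^sub>1 \<union> P\<^sub>l\<close>\<close>

lemma SP_verts_eq: "SP_verts k l = {..k} \<times> {..<l}"
  unfolding SP_verts_def by auto

lemma path_embedding_SP0:
  assumes "is_path E V xs" "length xs = l"
  shows "contains_subgraph (SP_verts 0 l) (SP_edges 0 l) V E"
  unfolding contains_subgraph_iff_embedding
proof
  show "subgraph_embedding (\<lambda>(i, j). xs ! j) (SP_verts 0 l) (SP_edges 0 l) V E"
    using assms walk_nth[of E xs] unfolding subgraph_embedding_def is_path_def SP_verts_def SP_edges_def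
    by (auto simp: inj_on_def nth_eq_iff_index_eq)
qed

text \<open>The new star is placed at index \<open>k\<close>, and the path moves from index \<open>k\<close> to \<open>Suc k\<close>, which
  is what \<open>min i k\<close> undoes.\<close>

definition SP_extend :: "(nat \<times> nat \<Rightarrow> 'a) \<Rightarrow> (nat \<Rightarrow> 'a) \<Rightarrow> nat \<Rightarrow> nat \<times> nat \<Rightarrow> 'a" where
  "SP_extend f s k = (\<lambda>(i, j). if i = k then s j else f (min i k, j))"

lemma SP_extend_inj_image:
  assumes "inj_on f (SP_verts k l)" "inj_on s {..<l}" "s ` {..<l} \<inter> f ` SP_verts k l = {}"
  shows "inj_on (SP_extend f s k) (SP_verts (Suc k) l)"
    and "SP_extend f s k ` SP_verts (Suc k) l \<subseteq> s ` {..<l} \<union> f ` SP_verts k l"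
proof -
  define r where "r = (\<lambda>(i::nat, j::nat). (min i k, j))"
  define Star where "Star = {k} \<times> {..<l}"
  define Rest where "Rest = SP_verts (Suc k) l - Star"
  let ?g = "SP_extend f s k"
  have r: "inj_on r Rest" "r ` Rest \<subseteq> SP_verts k l"
    unfolding r_def Rest_def Star_def SP_verts_eq inj_on_def by (auto simp: min_def split: if_splits)
  have g_Rest: "?g x = (f \<circ> r) x" if "x \<in> Rest" for x
    using that unfolding SP_extend_def r_def Rest_def Star_def SP_verts_eq by (auto split: if_splits)
  have "inj_on (f \<circ> r) Rest"
    by (rule comp_inj_on[OF r(1) inj_on_subset[OF assms(1) r(2)]])
  then have "inj_on ?g Rest"
    by (rule iffD1[OF inj_on_cong, rotated]) (simp add: g_Rest)
  moreover have Rest_img: "?g ` Rest \<subseteq> f ` SP_verts k l"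
    using r(2) g_Rest by (auto simp: image_iff)
  moreover have "inj_on ?g Star"
    using assms(2) unfolding SP_extend_def Star_def inj_on_def by auto
  moreover have Star_img: "?g ` Star \<subseteq> s ` {..<l}"
    unfolding SP_extend_def Star_def by auto
  ultimately have "inj_on ?g (Star \<union> Rest)"
    using assms(3) unfolding inj_on_Un by blast
  moreover have "SP_verts (Suc k) l = Star \<union> Rest"
    unfolding Rest_def Star_def SP_verts_eq by auto
  ultimately show "inj_on ?g (SP_verts (Suc k) l)" "?g ` SP_verts (Suc k) l \<subseteq> s ` {..<l} \<union> f ` SP_verts k l"
    using Rest_img Star_img by auto
qed

lemma SP_extend_edges:
  assumes "\<And>e. e \<in> SP_edges k l \<Longrightarrow> f ` e \<in> E" "\<And>j. 1 \<le> j \<Longrightarrow> j < l \<Longrightarrow> {s 0, s j} \<in> E"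
    and e: "e \<in> SP_edges (Suc k) l"
  shows "SP_extend f s k ` e \<in> E"
proof -
  consider (star) i j where "e = {(i, 0), (i, j)}" "i < Suc k" "1 \<le> j" "j < l"
    | (path) j where "e = {(Suc k, j), (Suc k, j + 1)}" "j + 1 < l"
    using e unfolding SP_edges_def by blast
  then show ?thesis
  proof cases
    case star
    show ?thesis
    proof (cases "i = k")
      case True
      then show ?thesis
        using star assms(2) by (simp add: SP_extend_def)
    next
      case False
      with star have "i < k"
        by simp
      then have "{(i, 0), (i, j)} \<in> SP_edges k l"
        using star unfolding SP_edges_def by blast
      moreover have "SP_extend f s k ` e = f ` {(i, 0), (i, j)}"
        using star \<open>i < k\<close> by (simp add: SP_extend_def)
      ultimately show ?thesis
        using assms(1) by metis
    qed
  next
    case path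
    then have "{(k, j), (k, j + 1)} \<in> SP_edges k l"
      unfolding SP_edges_def by blast
    moreover have "SP_extend f s k ` e = f ` {(k, j), (k, j + 1)}"
      using path by (simp add: SP_extend_def)
    ultimately show ?thesis
      using assms(1) by metis
  qed
qed

lemma SP_embedding_add_star:
  assumes sg: "simple_graph V E"
    and f: "subgraph_embedding f (SP_verts k l) (SP_edges k l) V E"
    and v: "v \<in> V - f ` SP_verts k l"
    and L: "L \<subseteq> neighbours E v - f ` SP_verts k l" "l - 1 \<le> card L"
  shows "contains_subgraph (SP_verts (Suc k) l) (SP_edges (Suc k) l) V E"
proof -
  have L_sub: "L \<subseteq> V - {v}"
    using L(1) neighbours_subset[OF sg] by blast
  have "finite L"
    by (rule finite_subset[OF _ finite_neighbours[OF sg]]) (use L(1) in blast)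
  then obtain q where q: "q ` {1..<l} \<subseteq> L" "inj_on q {1..<l}"
    using card_le_inj[of "{1..<l}" L] L(2) by auto
  define s where "s = q(0 := v)"
  have s_inj: "inj_on s {..<l}"
    using q L_sub unfolding s_def inj_on_def by (auto simp: subset_eq)
  have s_img: "s ` {..<l} \<subseteq> insert v L"
    using q unfolding s_def by (auto simp: image_subset_iff)
  have s_edge: "{s 0, s j} \<in> E" if "1 \<le> j" "j < l" for j
  proof -
    have "j \<in> {1..<l}"
      using that by simp
    then have "q j \<in> neighbours E v"
      using q(1) L(1) by blast
    then show ?thesis
      using that unfolding s_def neighbours_def by simp
  qed
  have f_inj: "inj_on f (SP_verts k l)" and f_V: "f ` SP_verts k l \<subseteq> V"
    and f_E: "\<And>e. e \<in> SP_edges k l \<Longrightarrow> f ` e \<in> E"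
    using f unfolding subgraph_embedding_def by auto
  have "s ` {..<l} \<inter> f ` SP_verts k l = {}"
    using s_img v L(1) by blast
  note g = SP_extend_inj_image[OF f_inj s_inj this]
  have "subgraph_embedding (SP_extend f s k) (SP_verts (Suc k) l) (SP_edges (Suc k) l) V E"
    unfolding subgraph_embedding_def
  proof (intro conjI ballI)
    show "SP_extend f s k ` SP_verts (Suc k) l \<subseteq> V"
      using g(2) s_img f_V v L_sub by blast
  qed (use g(1) SP_extend_edges[of k l f E s, OF f_E s_edge] in auto)
  then show ?thesis
    unfolding contains_subgraph_iff_embedding by blast
qed

subsection \<open>The induction on \<open>k\<close>\<close>

definition order_threshold :: "nat \<Rightarrow> nat \<Rightarrow> int" where
  "order_threshold k l = (int k + int (l div 2) - 1)^2 - (int k + int (l div 2) - 2) * int l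
                         + (int l)^2 * int k + (int l)^2 - int l"

lemma order_threshold_Suc:
  assumes "4 \<le> l"
  shows "order_threshold k l + int l \<le> order_threshold (Suc k) l"
proof -
  have "2 * int l \<le> int l * int l"
    using assms by (intro mult_right_mono) auto
  moreover have "2 \<le> int (l div 2)"
    using assms by simp
  ultimately show ?thesis
    unfolding order_threshold_def by (simp add: power2_eq_square algebra_simps)
qed

text \<open>This is where the order bound comes from: with \<open>h = l div 2\<close>,
  \<open>order_threshold (Suc k) l + (k + h - 1) l - l ((k + 2) l - 2) = (k + h)\<^sup>2 + l\<close>.\<close>

lemma order_threshold_star_removal:
  assumes "4 \<le> l" "order_threshold (Suc k) l \<le> int (n' + l)"
    and "(k + l div 2) * (n' + l) < e" "e \<le> e' + l * ((k + 2) * l - 2)"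
  shows "(k + l div 2 - 1) * n' < e'"
proof -
  define h where "h = l div 2"
  have "2 \<le> h"
    using assms(1) unfolding h_def by auto
  have "2 * 1 \<le> (k + 2) * l"
    using assms(1) by (intro mult_le_mono) auto
  have lower: "(int k + int h) * (int n' + int l) < int e"
    using assms(3) unfolding h_def by (metis of_nat_add of_nat_less_iff of_nat_mult)
  have "int e \<le> int e' + int l * int ((k + 2) * l - 2)"
    using assms(4) by (metis of_nat_add of_nat_le_iff of_nat_mult)
  then have upper: "int e \<le> int e' + int l * ((int k + 2) * int l - 2)"
    using \<open>2 * 1 \<le> (k + 2) * l\<close> by (simp add: of_nat_diff algebra_simps)
  have key: "order_threshold (Suc k) l + (int k + int h - 1) * int l - int l * ((int k + 2) * int l - 2)
      = (int k + int h)^2 + int l"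
    unfolding order_threshold_def h_def by (simp add: power2_eq_square algebra_simps)
  have "(int k + int h - 1) * int n' = (int k + int h) * (int n' + int l) - (int k + int h - 1) * int l
      - int l - int n'"
    by (simp add: algebra_simps)
  then have "(int k + int h - 1) * int n' < int e'"
    using lower upper key assms(2) zero_le_power2[of "int k + int h"] by linarith
  moreover have "int ((k + h - 1) * n') = (int k + int h - 1) * int n'"
    using \<open>2 \<le> h\<close> by (simp add: of_nat_diff)
  ultimately show ?thesis
    unfolding h_def[symmetric] by linarith
qed

lemma SP_embedding_add_hub:
  assumes sg: "simple_graph V E" and v: "v \<in> V" "(k + 2) * l - 1 \<le> degree E v"
    and f: "subgraph_embedding f (SP_verts k l) (SP_edges k l) (V - {v}) E"
  shows "contains_subgraph (SP_verts (Suc k) l) (SP_edges (Suc k) l) V E"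
proof -
  have "finite (f ` SP_verts k l)" "card (f ` SP_verts k l) \<le> Suc k * l"
    using card_image_le[of "SP_verts k l" f] by (simp_all add: SP_verts_eq card_cartesian_product)
  moreover have "(k + 2) * l = Suc k * l + l"
    by simp
  ultimately have "l - 1 \<le> card (neighbours E v - f ` SP_verts k l)"
    using v(2) diff_card_le_card_Diff[of "f ` SP_verts k l" "neighbours E v"] by linarith
  moreover have "v \<in> V - f ` SP_verts k l"
    using f v(1) unfolding subgraph_embedding_def by blast
  ultimately show ?thesis
    using SP_embedding_add_star[OF sg subgraph_embedding_mono[OF f Diff_subset order_refl]] by blast
qed

lemma bipartite_exists_degree_gt:
  assumes "simple_graph V E" "bipartite V E" "c * card V < 2 * card E"
  shows "\<exists>v\<in>V. c < degree E v"
proof (rule ccontr)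
  assume "\<not> ?thesis"
  then have "(\<Sum>v\<in>V. degree E v) \<le> card V * c"
    using sum_bounded_above[of V "degree E" c] by fastforce
  then show False
    using bipartite_twice_card_edges_le[OF assms(1,2)] assms(3) by (simp add: mult.commute)
qed

lemma bipartite_obtain_star:
  assumes "simple_graph V E" "bipartite V E" "(l - 2) * card V < 2 * card E"
  obtains v L where "v \<in> V" "L \<subseteq> neighbours E v" "card L = l - 1" "finite L"
proof -
  obtain v where "v \<in> V" "l - 2 < degree E v"
    using bipartite_exists_degree_gt[OF assms] by blast
  moreover from this have "l - 1 \<le> degree E v"
    by auto
  ultimately show ?thesis
    using that obtain_subset_with_card_n by metis
qed

lemma edge_density_delete_vertex:
  assumes "simple_graph V E" "v \<in> V" "Suc c * card V < card E"
  shows "c * card (V - {v}) < card (edges_avoiding E {v})"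
proof -
  have "finite V"
    using assms(1) unfolding simple_graph_def by simp
  then have "degree E v \<le> card (V - {v})"
    using neighbours_subset[OF assms(1)] by (intro card_mono) auto
  moreover have "card E \<le> card (edges_avoiding E {v}) + degree E v"
    using card_edges_le_avoiding_plus_degrees[OF assms(1), of "{v}"] by simp
  moreover have "Suc c * card V = c * card (V - {v}) + card (V - {v}) + Suc c"
    using card_Suc_Diff1[OF \<open>finite V\<close> assms(2), symmetric] by simp
  ultimately show ?thesis
    using assms(3) by linarith
qed

lemma edge_density_delete_star:
  assumes "simple_graph V E" "4 \<le> l" "T \<subseteq> V" "card T = l"
    and "\<And>t. t \<in> T \<Longrightarrow> degree E t \<le> (k + 2) * l - 2"
    and "order_threshold (Suc k) l \<le> int (card V)" "(k + l div 2) * card V < card E"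
  shows "(k + l div 2 - 1) * card (V - T) < card (edges_avoiding E T)"
proof -
  have "finite V"
    using assms(1) unfolding simple_graph_def by simp
  then have "finite T"
    using assms(3) by (rule finite_subset[rotated])
  have "(\<Sum>t\<in>T. degree E t) \<le> l * ((k + 2) * l - 2)"
    using sum_bounded_above[of T "degree E" "(k + 2) * l - 2"] assms(4,5) by simp
  then have "card E \<le> card (edges_avoiding E T) + l * ((k + 2) * l - 2)"
    using card_edges_le_avoiding_plus_degrees[OF assms(1) \<open>finite T\<close>] by linarith
  moreover have "card V = card (V - T) + l"
    using card_Diff_subset[OF \<open>finite T\<close> assms(3)] card_mono[OF \<open>finite V\<close> assms(3)] assms(4) by simp
  ultimately show ?thesis
    using order_threshold_star_removal[OF assms(2), of k "card (V - T)"] assms(6,7) by simp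
qed

lemma SP_Suc_from_deletions:
  assumes "simple_graph V E" "bipartite V E" and l: "4 \<le> l"
    and threshold: "order_threshold (Suc k) l \<le> int (card V)" and dense: "(k + l div 2) * card V < card E"
    and deletion: "\<And>S. S \<subseteq> V \<Longrightarrow> card S \<le> l \<Longrightarrow>
      (k + l div 2 - 1) * card (V - S) < card (edges_avoiding E S) \<Longrightarrow>
      contains_subgraph (SP_verts k l) (SP_edges k l) (V - S) (edges_avoiding E S)"
  shows "contains_subgraph (SP_verts (Suc k) l) (SP_edges (Suc k) l) V E"
proof -
  define h where "h = l div 2"
  have dense_h: "(k + h) * card V < card E"
    using dense unfolding h_def .
  have by_deletion: "\<exists>f. subgraph_embedding f (SP_verts k l) (SP_edges k l) (V - S) E"
    if "S \<subseteq> V" "card S \<le> l" "(k + h - 1) * card (V - S) < card (edges_avoiding E S)" for S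
    using deletion[OF that[unfolded h_def]] subgraph_embedding_mono[OF _ order_refl edges_avoiding_subset]
    unfolding contains_subgraph_iff_embedding by blast
  show ?thesis
  proof (cases "\<exists>v\<in>V. (k + 2) * l - 1 \<le> degree E v")
    case True
    then obtain v where v: "v \<in> V" "(k + 2) * l - 1 \<le> degree E v"
      by blast
    have "k + h = Suc (k + h - 1)"
      using l unfolding h_def by simp
    then have "(k + h - 1) * card (V - {v}) < card (edges_avoiding E {v})"
      using edge_density_delete_vertex[OF assms(1) v(1), of "k + h - 1"] dense_h by simp
    then obtain f where "subgraph_embedding f (SP_verts k l) (SP_edges k l) (V - {v}) E"
      using by_deletion[of "{v}"] v(1) l by auto
    then show ?thesis
      by (rule SP_embedding_add_hub[OF assms(1) v])
  next
    case False
    have "l - 2 \<le> 2 * (k + h)"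
      unfolding h_def by presburger
    then have "(l - 2) * card V \<le> 2 * ((k + h) * card V)"
      by (metis mult.assoc mult_le_mono1)
    then have "(l - 2) * card V < 2 * card E"
      using dense_h by linarith
    then obtain v L where v: "v \<in> V" and L: "L \<subseteq> neighbours E v" "card L = l - 1" "finite L"
      by (rule bipartite_obtain_star[OF assms(1,2)])
    define T where "T = insert v L"
    have "v \<notin> L" "L \<subseteq> V"
      using L(1) neighbours_subset[OF assms(1)] by blast+
    then have T: "T \<subseteq> V" "card T = l"
      using v L(2,3) l unfolding T_def by auto
    have "degree E t \<le> (k + 2) * l - 2" if "t \<in> T" for t
      using False that T(1) by fastforce
    then have "(k + h - 1) * card (V - T) < card (edges_avoiding E T)"
      using edge_density_delete_star[OF assms(1) l T _ threshold dense] unfolding h_def by simp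
    then obtain f where f: "subgraph_embedding f (SP_verts k l) (SP_edges k l) (V - T) E"
      using by_deletion T by blast
    then have img: "f ` SP_verts k l \<subseteq> V - T"
      unfolding subgraph_embedding_def by blast
    show ?thesis
    proof (rule SP_embedding_add_star[OF assms(1) subgraph_embedding_mono[OF f Diff_subset order_refl]])
      show "v \<in> V - f ` SP_verts k l" "L \<subseteq> neighbours E v - f ` SP_verts k l"
        using v L(1) img unfolding T_def by blast+
    qed (use L(2) in simp)
  qed
qed

lemma dense_bipartite_contains_SP:
  assumes "4 \<le> l"
  shows "simple_graph V E \<Longrightarrow> bipartite V E \<Longrightarrow> order_threshold k l \<le> int (card V) \<Longrightarrow>
    (k + l div 2 - 1) * card V < card E \<Longrightarrow> contains_subgraph (SP_verts k l) (SP_edges k l) V E"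
proof (induction k arbitrary: V E)
  case 0
  have "2 \<le> l div 2" "l \<le> 2 * (l div 2) + 1"
    using assms by auto
  then obtain xs where "is_path E V xs" "length xs = l"
    using bipartite_long_path[OF _ _ "0.prems"(1,2)] "0.prems"(4) by auto
  then show ?case
    by (rule path_embedding_SP0)
next
  case (Suc k)
  have finV: "finite V"
    using Suc.prems(1) unfolding simple_graph_def by simp
  show ?case
  proof (rule SP_Suc_from_deletions[OF Suc.prems(1,2) assms Suc.prems(3)])
    show "(k + l div 2) * card V < card E"
      using Suc.prems(4) assms by simp
    fix S assume S: "S \<subseteq> V" "card S \<le> l"
    have "card (V - S) + card S = card V"
      using card_Diff_subset[OF finite_subset[OF S(1) finV] S(1)] card_mono[OF finV S(1)] by simp
    then have "order_threshold k l \<le> int (card (V - S))"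
      using Suc.prems(3) order_threshold_Suc[OF assms, of k] S(2) by linarith
    then show "(k + l div 2 - 1) * card (V - S) < card (edges_avoiding E S) \<Longrightarrow>
        contains_subgraph (SP_verts k l) (SP_edges k l) (V - S) (edges_avoiding E S)"
      using Suc.IH[OF simple_graph_edges_avoiding[OF Suc.prems(1)] bipartite_edges_avoiding[OF Suc.prems(2)]]
      by blast
  qed
qed

theorem lemma3p2:
  fixes V :: "'a set" and E :: "'a set set" and k l :: nat
  assumes "l \<ge> 4"
    and "simple_graph V E"
    and "bipartite V E"
    and "int (card V) \<ge> (int k + int (l div 2) - 1)^2 - (int k + int (l div 2) - 2) * int l
                          + (int l)^2 * int k + (int l)^2 - int l"
    and "\<not> contains_subgraph (SP_verts k l) (SP_edges k l) V E"
  shows "card E \<le> (k + l div 2 - 1) * card V"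
  using dense_bipartite_contains_SP[OF assms(1-3)] assms(4,5)
  unfolding order_threshold_def by fastforce

end
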